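(* For every $n\ge 2$, every symmetric pseudo-Boolean function of $n$ variables has a quadratization using at most $n-2$ auxiliary variables.
   Context: A pseudo-Boolean function is a map $f:\{0,1\}^n\to\mathbb{R}$; it is symmetric if its value depends only on the Hamming weight $\sum_j x_j$. A quadratization of $f$ using $m$ auxiliary variables is a polynomial $g(x,y)$ of degree at most $2$ in the variables $x_1,\ldots,x_n,y_1,\ldots,y_m$ such that $f(x)=\min\{g(x,y):y\in\{0,1\}^m\}$ for all $x\in\{0,1\}^n$. *)

theory Defs
  imports Complex_Main
begin

text \<open>Points of the Boolean cube \{0,1\}^n are represented as functions
  nat => real, taking values 0/1 on indices below n and 0 elsewhere.\<close>
definition bcube :: "nat \<Rightarrow> (nat \<Rightarrow> real) set" where
  "bcube n = {x. (\<forall>i<n. x i = 0 \<or> x i = 1) \<and> (\<forall>i\<ge>n. x i = 0)}"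

definition hweight :: "nat \<Rightarrow> (nat \<Rightarrow> real) \<Rightarrow> real" where
  "hweight n x = (\<Sum>j<n. x j)"

definition symmetric_pbf :: "nat \<Rightarrow> ((nat \<Rightarrow> real) \<Rightarrow> real) \<Rightarrow> bool" where
  "symmetric_pbf n f \<longleftrightarrow>
     (\<forall>x\<in>bcube n. \<forall>x'\<in>bcube n. hweight n x = hweight n x' \<longrightarrow> f x = f x')"

definition concat_vars :: "nat \<Rightarrow> (nat \<Rightarrow> real) \<Rightarrow> (nat \<Rightarrow> real) \<Rightarrow> nat \<Rightarrow> real" where
  "concat_vars n x y = (\<lambda>i. if i < n then x i else y (i - n))"

definition quad_poly :: "nat \<Rightarrow> real \<Rightarrow> (nat \<Rightarrow> real) \<Rightarrow> (nat \<Rightarrow> nat \<Rightarrow> real)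
     \<Rightarrow> (nat \<Rightarrow> real) \<Rightarrow> real" where
  "quad_poly N c a Q z = c + (\<Sum>i<N. a i * z i) + (\<Sum>i<N. \<Sum>j<N. Q i j * z i * z j)"

definition is_quadratization ::
  "nat \<Rightarrow> ((nat \<Rightarrow> real) \<Rightarrow> real) \<Rightarrow> nat \<Rightarrow> real \<Rightarrow> (nat \<Rightarrow> real)
     \<Rightarrow> (nat \<Rightarrow> nat \<Rightarrow> real) \<Rightarrow> bool" where
  "is_quadratization n f m c a Q \<longleftrightarrow>
     (\<forall>x\<in>bcube n. f x = Min ((\<lambda>y. quad_poly (n + m) c a Q (concat_vars n x y)) ` bcube m))"

definition has_quadratization :: "nat \<Rightarrow> ((nat \<Rightarrow> real) \<Rightarrow> real) \<Rightarrow> nat \<Rightarrow> bool" where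
  "has_quadratization n f m \<longleftrightarrow> (\<exists>c a Q. is_quadratization n f m c a Q)"

end

theory Submission
  imports Defs
begin

text \<open>
  A symmetric function f on the cube is determined by its weight profile
  F(w) = f(1^w 0^(n-w)), w = 0..n.  We show that every F on {0..n} can be written as
  F(w) = c + b w + g w^2 + sum over j < n-2 of min(0, t_j (w - s_j)):
  choose g as half the largest second difference of F; then h(w) = F(w) - g w^2 has
  only non-positive second differences, one of them zero, and the discrete Taylor
  expansion h(w) = h(0) + (h(1)-h(0)) w + sum_k (second difference at k) (w-k)_+
  turns into a sum of n-2 concave hinges min(0, t (w - s)).
  Each hinge is the minimum over one auxiliary y in {0,1} of y t (W - s), where W is
  the Hamming weight; W and W^2 are quadratic in x.  So the quadratic polynomial
  c + b W + g W^2 + sum_j y_j t_j (W - s_j), minimised over y, quadratises f.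
\<close>

section \<open>The Boolean cube\<close>

lemma sum_lessThan_add:
  fixes g :: "nat \<Rightarrow> real"
  shows "(\<Sum>i<n+m. g i) = (\<Sum>i<n. g i) + (\<Sum>k<m. g (n+k))"
  by (induction m) (auto simp: add.assoc)

lemma bcube_eq_indicators: "bcube m = (\<lambda>S i. if i \<in> S then 1 else 0) ` Pow {..<m}"
proof
  show "bcube m \<subseteq> (\<lambda>S i. if i \<in> S then 1 else 0) ` Pow {..<m}"
  proof
    fix x assume x: "x \<in> bcube m"
    have "x = (\<lambda>i. if i \<in> {i. i < m \<and> x i = 1} then 1 else 0)"
    proof
      fix i show "x i = (if i \<in> {i. i < m \<and> x i = 1} then 1 else 0)"
        using x unfolding bcube_def by (cases "i < m") auto
    qed
    then show "x \<in> (\<lambda>S i. if i \<in> S then 1 else 0) ` Pow {..<m}" by blast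
  qed
next
  show "(\<lambda>S i. if i \<in> S then 1 else 0) ` Pow {..<m} \<subseteq> bcube m"
    unfolding bcube_def by auto
qed

lemma finite_bcube: "finite (bcube m)"
  unfolding bcube_eq_indicators by simp

text \<open>The point with weight N whose ones come first; it represents all points of weight N
  when f is symmetric.\<close>
definition first_ones :: "nat \<Rightarrow> nat \<Rightarrow> real" where
  "first_ones N = (\<lambda>i. if i < N then 1 else 0)"

lemma first_ones_in_bcube: "N \<le> n \<Longrightarrow> first_ones N \<in> bcube n"
  unfolding bcube_def first_ones_def by auto

lemma hweight_first_ones:
  assumes "N \<le> n"
  shows "hweight n (first_ones N) = real N"
proof -
  have "hweight n (first_ones N) = (\<Sum>i<N + (n-N). first_ones N i)"
    unfolding hweight_def using assms by simp
  also have "\<dots> = real N"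
    unfolding sum_lessThan_add first_ones_def by simp
  finally show ?thesis .
qed

lemma symmetric_pbf_weight_profile:
  assumes sym: "symmetric_pbf n f" and x: "x \<in> bcube n"
  obtains N where "N \<le> n" "hweight n x = real N" "f x = f (first_ones N)"
proof -
  define N where "N = card ({..<n} \<inter> {i. x i = 1})"
  have "N \<le> n"
    unfolding N_def by (metis card_lessThan card_mono finite_lessThan inf_le1)
  have "hweight n x = (\<Sum>i<n. if x i = 1 then 1 else 0)"
    unfolding hweight_def using x unfolding bcube_def by (intro sum.cong) auto
  then have weight: "hweight n x = real N"
    unfolding N_def by (simp add: sum.If_cases)
  then have "f x = f (first_ones N)"
    using sym x first_ones_in_bcube[OF \<open>N \<le> n\<close>] hweight_first_ones[OF \<open>N \<le> n\<close>]
    unfolding symmetric_pbf_def by metis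
  with \<open>N \<le> n\<close> weight that show ?thesis by blast
qed

section \<open>Quadratization of hinge sums of the Hamming weight\<close>

text \<open>A linear function of y is minimised over the cube by switching on exactly the
  negative coefficients.\<close>
lemma Min_linear_over_bcube:
  "Min ((\<lambda>y. C + (\<Sum>k<m. y k * b k)) ` bcube m) = C + (\<Sum>k<m. min 0 (b k :: real))"
proof (rule Min_eqI)
  show "finite ((\<lambda>y. C + (\<Sum>k<m. y k * b k)) ` bcube m)"
    using finite_bcube by simp
next
  fix v assume "v \<in> (\<lambda>y. C + (\<Sum>k<m. y k * b k)) ` bcube m"
  then obtain y where y: "y \<in> bcube m" and v: "v = C + (\<Sum>k<m. y k * b k)" by blast
  have "(\<Sum>k<m. min 0 (b k)) \<le> (\<Sum>k<m. y k * b k)"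
  proof (rule sum_mono)
    fix k assume "k \<in> {..<m}"
    then have "y k = 0 \<or> y k = 1" using y unfolding bcube_def by auto
    then show "min 0 (b k) \<le> y k * b k" by auto
  qed
  then show "C + (\<Sum>k<m. min 0 (b k)) \<le> v" using v by simp
next
  define y where "y k = (if k < m \<and> b k < 0 then 1 else (0::real))" for k
  have y: "y \<in> bcube m" unfolding bcube_def y_def by auto
  have "(\<Sum>k<m. y k * b k) = (\<Sum>k<m. min 0 (b k))"
    unfolding y_def by (rule sum.cong) auto
  then show "C + (\<Sum>k<m. min 0 (b k)) \<in> (\<lambda>y. C + (\<Sum>k<m. y k * b k)) ` bcube m"
    using image_eqI[OF _ y, of _ "\<lambda>y. C + (\<Sum>k<m. y k * b k)"] by simp
qed

lemma quad_poly_hinge_coefficients: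
  assumes "a = (\<lambda>i. if i < n then \<beta> else - t (i-n) * s (i-n))"
    and "Q = (\<lambda>i j. if i < n then (if j < n then \<gamma> else t (j-n)) else 0)"
  shows "quad_poly (n+m) c a Q (concat_vars n x y) =
     c + \<beta> * hweight n x + \<gamma> * (hweight n x)^2 + (\<Sum>k<m. y k * (t k * (hweight n x - s k)))"
proof -
  let ?z = "concat_vars n x y" and ?W = "hweight n x"
  have linear: "(\<Sum>i<n+m. a i * ?z i) = \<beta> * ?W + (\<Sum>k<m. - t k * s k * y k)"
    unfolding sum_lessThan_add assms concat_vars_def hweight_def by (simp add: sum_distrib_left)
  have row: "(\<Sum>j<n+m. Q i j * ?z i * ?z j)
      = (if i < n then \<gamma> * x i * ?W + (\<Sum>k<m. t k * x i * y k) else 0)" for i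
    unfolding sum_lessThan_add assms concat_vars_def hweight_def
    by (auto simp: sum_distrib_left mult.assoc)
  have "(\<Sum>i<n+m. \<Sum>j<n+m. Q i j * ?z i * ?z j)
      = (\<Sum>i<n+m. if i < n then \<gamma> * x i * ?W + (\<Sum>k<m. t k * x i * y k) else 0)"
    by (rule sum.cong[OF refl row])
  also have "\<dots> = (\<Sum>i<n. \<gamma> * x i * ?W) + (\<Sum>i<n. \<Sum>k<m. t k * x i * y k)"
    by (subst sum_lessThan_add) (simp add: sum.distrib)
  also have "(\<Sum>i<n. \<gamma> * x i * ?W) = \<gamma> * ?W^2"
    by (simp only: hweight_def power2_eq_square sum_distrib_left[symmetric]
        sum_distrib_right[symmetric] mult.assoc)
  also have "(\<Sum>i<n. \<Sum>k<m. t k * x i * y k) = (\<Sum>k<m. t k * ?W * y k)"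
    by (subst sum.swap) (simp only: hweight_def sum_distrib_left[symmetric] sum_distrib_right[symmetric])
  finally have quadratic:
    "(\<Sum>i<n+m. \<Sum>j<n+m. Q i j * ?z i * ?z j) = \<gamma> * ?W^2 + (\<Sum>k<m. t k * ?W * y k)" .
  have "(\<Sum>k<m. y k * (t k * (?W - s k))) = (\<Sum>k<m. - t k * s k * y k) + (\<Sum>k<m. t k * ?W * y k)"
    unfolding sum.distrib[symmetric] by (rule sum.cong) (auto simp: algebra_simps)
  then show ?thesis unfolding quad_poly_def linear quadratic by simp
qed

lemma quadratization_of_hinge_profile:
  assumes sym: "symmetric_pbf n f"
    and profile: "\<forall>w\<le>n. f (first_ones w) =
      c + \<beta> * real w + \<gamma> * (real w)^2 + (\<Sum>k<m. min 0 (t k * (real w - s k)))"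
  shows "has_quadratization n f m"
proof -
  define a where "a = (\<lambda>i. if i < n then \<beta> else - t (i-n) * s (i-n))"
  define Q where "Q = (\<lambda>i j. if i < n then (if j < n then \<gamma> else t (j-n)) else (0::real))"
  have "is_quadratization n f m c a Q"
    unfolding is_quadratization_def
  proof
    fix x assume x: "x \<in> bcube n"
    then obtain N where N: "N \<le> n" "hweight n x = real N" "f x = f (first_ones N)"
      using sym symmetric_pbf_weight_profile by blast
    have "Min ((\<lambda>y. quad_poly (n + m) c a Q (concat_vars n x y)) ` bcube m)
       = Min ((\<lambda>y. (c + \<beta> * real N + \<gamma> * (real N)^2)
                  + (\<Sum>k<m. y k * (t k * (real N - s k)))) ` bcube m)"
      by (simp only: quad_poly_hinge_coefficients[OF a_def Q_def] N(2))
    also have "\<dots> = f x"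
      unfolding Min_linear_over_bcube using profile N by simp
    finally show "f x = Min ((\<lambda>y. quad_poly (n + m) c a Q (concat_vars n x y)) ` bcube m)" ..
  qed
  then show ?thesis unfolding has_quadratization_def by blast
qed

section \<open>Univariate functions as a quadratic plus n-2 concave hinges\<close>

definition second_diff :: "(nat \<Rightarrow> real) \<Rightarrow> nat \<Rightarrow> real" where
  "second_diff h k = h (k+1) - 2 * h k + h (k-1)"

text \<open>The hinge w \<mapsto> (w-k)_+ has second difference equal to the indicator of w+1 = k.\<close>
lemma second_diff_hinge:
  fixes w k :: nat
  shows "real (w+2-k) - 2 * real (w+1-k) + real (w-k) = (if k = w+1 then 1 else 0)"
  by (cases "k \<le> w"; cases "k = w+1") auto

lemma discrete_taylor:
  fixes h :: "nat \<Rightarrow> real"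
  assumes "w \<le> n"
  shows "h w = h 0 + (h 1 - h 0) * real w + (\<Sum>k\<in>{1..<n}. second_diff h k * real (w - k))"
proof -
  define G where "G w = h 0 + (h 1 - h 0) * real w + (\<Sum>k\<in>{1..<n}. second_diff h k * real (w - k))"
    for w
  have recurrence: "G (v+2) = 2 * G (v+1) - G v + second_diff h (v+1)" if "v+2 \<le> n" for v
  proof -
    have "(\<Sum>k\<in>{1..<n}. second_diff h k * real (v+2-k)) - 2 * (\<Sum>k\<in>{1..<n}. second_diff h k * real (v+1-k))
        + (\<Sum>k\<in>{1..<n}. second_diff h k * real (v-k))
        = (\<Sum>k\<in>{1..<n}. second_diff h k * (real (v+2-k) - 2 * real (v+1-k) + real (v-k)))"
      by (simp add: algebra_simps sum.distrib sum_subtractf sum_distrib_left)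
    also have "\<dots> = (\<Sum>k\<in>{1..<n}. if k = v+1 then second_diff h k else 0)"
      by (intro sum.cong) (auto simp: second_diff_hinge)
    also have "\<dots> = second_diff h (v+1)" using that by (simp add: sum.delta')
    finally show ?thesis unfolding G_def by (simp add: algebra_simps)
  qed
  have "G w = h w" if "w \<le> n" for w
    using that
  proof (induction w rule: less_induct)
    case (less w)
    have "w = 0 \<or> w = 1 \<or> (\<exists>v. w = v+2)" by presburger
    then consider "w = 0" | "w = 1" | v where "w = v+2" by blast
    then show ?case
    proof cases
      case 1 then show ?thesis unfolding G_def by simp
    next
      case 2
      have "(\<Sum>k\<in>{1..<n}. second_diff h k * real (1 - k)) = 0" by (intro sum.neutral) auto
      then show ?thesis unfolding G_def 2 by simp
    next
      case (3 v)
      have "G w = 2 * G (v+1) - G v + second_diff h (v+1)" using recurrence less.prems 3 by simp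
      also have "\<dots> = 2 * h (v+1) - h v + second_diff h (v+1)" using less 3 by simp
      also have "\<dots> = h w" unfolding second_diff_def 3 by simp
      finally show ?thesis .
    qed
  qed
  then show ?thesis using assms unfolding G_def by simp
qed

lemma concave_hinge:
  fixes E :: real and w k :: nat
  assumes "E \<le> 0"
  shows "E * real (w - k) = min 0 (E * (real w - real k))"
proof (cases "k \<le> w")
  case True
  then have "E * (real w - real k) \<le> 0" using assms by (intro mult_nonpos_nonneg) auto
  with True show ?thesis by (simp add: min_def of_nat_diff)
next
  case False
  then show ?thesis using assms by (simp add: mult_nonpos_nonpos min_def)
qed

text \<open>A sum over the n-1 interior points with one vanishing term is a sum of n-2 terms.\<close>
lemma sum_interior_drop_zero:
  fixes \<phi> :: "nat \<Rightarrow> real"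
  assumes k0: "k0 \<in> {1..<n}" and zero: "\<phi> k0 = 0"
  shows "(\<Sum>k\<in>{1..<n}. \<phi> k) = (\<Sum>j<n-2. \<phi> (if j+1 < k0 then j+1 else j+2))"
proof -
  define \<sigma> where "\<sigma> j = (if j+1 < k0 then j+1 else j+2)" for j :: nat
  have inj: "inj_on \<sigma> {..<n-2}" unfolding \<sigma>_def by (auto simp: inj_on_def split: if_splits)
  have "\<sigma> ` {..<n-2} = {1..<n} - {k0}"
  proof
    show "\<sigma> ` {..<n-2} \<subseteq> {1..<n} - {k0}" using k0 unfolding \<sigma>_def by auto
    show "{1..<n} - {k0} \<subseteq> \<sigma> ` {..<n-2}"
    proof
      fix k assume k: "k \<in> {1..<n} - {k0}"
      show "k \<in> \<sigma> ` {..<n-2}"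
      proof (cases "k < k0")
        case True
        then show ?thesis using k k0 unfolding \<sigma>_def by (intro image_eqI[where x="k-1"]) auto
      next
        case False
        then show ?thesis using k k0 unfolding \<sigma>_def by (intro image_eqI[where x="k-2"]) auto
      qed
    qed
  qed
  then have "(\<Sum>j<n-2. \<phi> (\<sigma> j)) = (\<Sum>k\<in>{1..<n}. \<phi> k) - \<phi> k0"
    using sum.reindex[OF inj, of \<phi>] k0 by (simp add: sum_diff1)
  then show ?thesis using zero unfolding \<sigma>_def by simp
qed

lemma quadratic_plus_hinges:
  fixes F :: "nat \<Rightarrow> real"
  assumes "n \<ge> 2"
  shows "\<exists>c \<beta> \<gamma> (t::nat\<Rightarrow>real) (s::nat\<Rightarrow>real). \<forall>w\<le>n.
     F w = c + \<beta> * real w + \<gamma> * (real w)^2 + (\<Sum>j<n-2. min 0 (t j * (real w - s j)))"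
proof -
  have fin: "finite (second_diff F ` {1..<n})" and ne: "second_diff F ` {1..<n} \<noteq> {}"
    using assms by auto
  obtain k0 where k0: "k0 \<in> {1..<n}" "second_diff F k0 = Max (second_diff F ` {1..<n})"
    using Max_in[OF fin ne] by auto
  define \<gamma> where "\<gamma> = second_diff F k0 / 2"
  define h where "h w = F w - \<gamma> * (real w)^2" for w
  have shift: "second_diff h k = second_diff F k - second_diff F k0" if "k \<ge> 1" for k
  proof -
    have "second_diff h k
        = second_diff F k - \<gamma> * ((real (k+1))^2 - 2 * (real k)^2 + (real (k-1))^2)"
      unfolding second_diff_def h_def by (simp add: algebra_simps)
    moreover have "real (k-1) = real k - 1" using that by simp
    then have "(real (k+1))^2 - 2 * (real k)^2 + (real (k-1))^2 = 2"
      by (simp add: power2_eq_square algebra_simps)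
    ultimately show ?thesis unfolding \<gamma>_def by simp
  qed
  have concave: "second_diff h k \<le> 0" if "k \<in> {1..<n}" for k
    using shift[of k] k0 that by simp
  have flat: "second_diff h k0 = 0" using shift k0 by simp
  define \<sigma> where "\<sigma> j = (if j+1 < k0 then j+1 else j+2)" for j :: nat
  have "F w = h 0 + (h 1 - h 0) * real w + \<gamma> * (real w)^2
      + (\<Sum>j<n-2. min 0 ((second_diff h \<circ> \<sigma>) j * (real w - (real \<circ> \<sigma>) j)))" if "w \<le> n" for w
  proof -
    have "(\<Sum>k\<in>{1..<n}. second_diff h k * real (w - k))
        = (\<Sum>k\<in>{1..<n}. min 0 (second_diff h k * (real w - real k)))"
      using concave concave_hinge by (intro sum.cong) auto
    also have "\<dots> = (\<Sum>j<n-2. min 0 (second_diff h (\<sigma> j) * (real w - real (\<sigma> j))))"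
      unfolding \<sigma>_def by (rule sum_interior_drop_zero[OF k0(1)]) (simp add: flat)
    finally have hinges: "(\<Sum>k\<in>{1..<n}. second_diff h k * real (w - k))
        = (\<Sum>j<n-2. min 0 (second_diff h (\<sigma> j) * (real w - real (\<sigma> j))))" .
    have "F w = \<gamma> * (real w)^2 + h w" unfolding h_def by simp
    then show ?thesis
      using discrete_taylor[OF that, of h] hinges unfolding comp_def by linarith
  qed
  then show ?thesis by blast
qed

theorem theorem3:
  fixes n :: nat and f :: "(nat \<Rightarrow> real) \<Rightarrow> real"
  assumes "n \<ge> 2" and "symmetric_pbf n f"
  shows "\<exists>m\<le>n - 2. has_quadratization n f m"
proof -
  obtain c \<beta> \<gamma> t s where "\<forall>w\<le>n. f (first_ones w) =
      c + \<beta> * real w + \<gamma> * (real w)^2 + (\<Sum>j<n-2. min 0 (t j * (real w - s j)))"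
    using quadratic_plus_hinges[OF assms(1), of "\<lambda>w. f (first_ones w)"] by blast
  then have "has_quadratization n f (n - 2)"
    using quadratization_of_hinge_profile[OF assms(2)] by blast
  then show ?thesis by blast
qed

end
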